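(* Let $p>2$ and let $h:[1,\infty)\to[2/p,\infty)$ be a function which is increasing and continuous on $[1,\infty)$, satisfies $h(t)>t-1$ for all $t\ge1$, is differentiable on $(1,\infty)$ with $$h'(t)=\left(\frac2p\right)^{p+1}(h(t))^{2-p}(h(t)-t+1)^{-2},$$ and satisfies $h(1)=h'(1+)=2/p$. Then $h'(t)\le 1$ for all $t>1$.
   Context: $h'(1+)$ denotes the right-hand derivative of $h$ at $1$. *)

theory Defs
  imports "HOL-Analysis.Analysis"
begin

end

theory Submission
  imports Defs
begin

text \<open>Write \<open>u(t) = h(t) - t + 1\<close> and \<open>c = (2/p)^(p+1)\<close>, so that \<open>h' = c h^(2-p) / u^2\<close> and
  \<open>h' \<le> 1\<close> amounts to the positivity of the gap \<open>G = u^2 - c h^(2-p)\<close>. At \<open>t = 1\<close> the gap is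
  \<open>(2/p)^2 - (2/p)^3 > 0\<close>. At a first zero of \<open>G\<close> we would have \<open>h' = 1\<close>, hence \<open>u' = 0\<close> and
  \<open>G' = (p - 2) c h^(1-p) h' > 0\<close>; but a continuous function that is positive before its first
  zero cannot cross it increasing.\<close>

lemma pos_if_deriv_pos_at_zeros:
  fixes G :: "real \<Rightarrow> real"
  assumes cont: "continuous_on {a..b} G" and "a \<le> b" and Ga: "G a > 0"
    and zero_deriv: "\<And>t. a < t \<Longrightarrow> t \<le> b \<Longrightarrow> G t = 0 \<Longrightarrow>
      \<exists>D>0. (G has_real_derivative D) (at t)"
  shows "G b > 0"
proof (rule ccontr)
  assume "\<not> G b > 0"
  define Z where "Z = {a..b} \<inter> G -` {0}"
  have "\<exists>x. a \<le> x \<and> x \<le> b \<and> G x = 0"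
    using \<open>\<not> G b > 0\<close> \<open>a \<le> b\<close> Ga cont by (intro IVT2') auto
  then have "Z \<noteq> {}" by (auto simp: Z_def)
  moreover have "closed Z"
    unfolding Z_def by (rule continuous_closed_preimage[OF cont]) auto
  moreover have Zbd: "bdd_below Z" by (auto simp: Z_def bdd_below_def)
  ultimately have "Inf Z \<in> Z" using closed_contains_Inf by blast
  then have t0: "a < Inf Z" "Inf Z \<le> b" "G (Inf Z) = 0"
    using Ga by (auto simp: Z_def less_eq_real_def)
  then obtain D where "D > 0" "(G has_real_derivative D) (at (Inf Z))"
    using zero_deriv by blast
  then obtain d where d: "d > 0" "\<forall>e>0. e < d \<longrightarrow> G (Inf Z - e) < G (Inf Z)"
    using DERIV_pos_inc_left by blast
  define e where "e = min (d/2) ((Inf Z - a)/2)"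
  have e: "0 < e" "e < d" "e \<le> (Inf Z - a)/2"
    using t0 d unfolding e_def by (auto simp: min_def)
  define s where "s = Inf Z - e"
  have s: "a \<le> s" "s < Inf Z" using e by (auto simp: s_def)
  have "G s < 0" using d t0 e by (auto simp: s_def)
  moreover have "continuous_on {a..s} G"
    using cont by (rule continuous_on_subset) (use s t0 in auto)
  ultimately obtain x where "a \<le> x" "x \<le> s" "G x = 0"
    using IVT2'[of G s 0 a] s Ga by auto
  with s t0 have "x \<in> Z" by (auto simp: Z_def)
  then have "Inf Z \<le> x" using Zbd by (rule cInf_lower)
  with \<open>x \<le> s\<close> s show False by simp
qed

lemma has_real_derivative_ode_gap:
  fixes h :: "real \<Rightarrow> real"
  assumes dh: "(h has_real_derivative D) (at t)" and "h t > 0"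
  shows "((\<lambda>s. (h s - s + 1)^2 - c * h s powr q) has_real_derivative
      2 * (h t - t + 1) * (D - 1) - c * q * h t powr (q - 1) * D) (at t)"
proof -
  have du: "((\<lambda>s. h s - s + 1) has_real_derivative D - 1) (at t)"
    using DERIV_add[OF DERIV_diff[OF dh DERIV_ident] DERIV_const[of 1]] by simp
  have dhq: "((\<lambda>s. h s powr q) has_real_derivative q * h t powr (q - 1) * D) (at t)"
    using DERIV_fun_powr[OF dh \<open>h t > 0\<close>, of q] by simp
  have "((\<lambda>s. (h s - s + 1)^2 - c * h s powr q) has_real_derivative
      of_nat 2 * ((D - 1) * (h t - t + 1) ^ (2 - Suc 0)) - c * (q * h t powr (q - 1) * D)) (at t)"
    by (intro DERIV_diff DERIV_cmult DERIV_power du dhq)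
  then show ?thesis by (simp add: algebra_simps)
qed

lemma ode_gap_pos:
  fixes h :: "real \<Rightarrow> real" and c q :: real
  assumes "c > 0" "q < 0"
    and cont: "continuous_on {1..} h"
    and hpos: "\<forall>t\<ge>1. h t > 0" and upos: "\<forall>t\<ge>1. h t - t + 1 > 0"
    and dh: "\<forall>t>1. (h has_real_derivative c * h t powr q / (h t - t + 1)^2) (at t)"
    and init: "c * h 1 powr q < (h 1)^2"
    and "t \<ge> 1"
  shows "c * h t powr q < (h t - t + 1)^2"
proof -
  let ?G = "\<lambda>s. (h s - s + 1)^2 - c * h s powr q"
  have "?G t > 0"
  proof (rule pos_if_deriv_pos_at_zeros[of 1 t])
    show "continuous_on {1..t} ?G"
      using hpos continuous_on_subset[OF cont, of "{1..t}"]
      by (force intro!: continuous_intros)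
    fix s assume s: "1 < s" "s \<le> t" and "?G s = 0"
    have hs: "h s > 0" "h s - s + 1 > 0" using hpos upos s by auto
    with \<open>?G s = 0\<close> have "c * h s powr q / (h s - s + 1)^2 = 1"
      using \<open>c > 0\<close> by simp
    then have "(h has_real_derivative 1) (at s)" using dh s by metis
    from has_real_derivative_ode_gap[OF this hs(1), of c q]
    have "(?G has_real_derivative - c * q * h s powr (q - 1)) (at s)" by simp
    moreover have "h s powr (q - 1) > 0" using hs by simp
    then have "- c * q * h s powr (q - 1) > 0"
      using mult_neg_pos[OF mult_pos_neg[OF \<open>c > 0\<close> \<open>q < 0\<close>]] by simp
    ultimately show "\<exists>D>0. (?G has_real_derivative D) (at s)" by blast
  qed (use \<open>t \<ge> 1\<close> init in auto)
  then show ?thesis by simp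
qed

theorem lemma4p1:
  fixes p :: real and h :: "real \<Rightarrow> real"
  assumes p: "p > 2"
    and range: "\<forall>t\<ge>1. h t \<ge> 2 / p"
    and incr: "mono_on {1..} h"
    and cont: "continuous_on {1..} h"
    and gt: "\<forall>t\<ge>1. h t > t - 1"
    and deriv_eq: "\<forall>t>1. (h has_real_derivative
          ((2 / p) powr (p + 1) * (h t) powr (2 - p) * (h t - t + 1) powr (-2))) (at t)"
    and h1: "h 1 = 2 / p"
    and rderiv1: "(h has_real_derivative (2 / p)) (at_right 1)"
  shows "\<forall>t>1. deriv h t \<le> 1"
proof (intro allI impI)
  fix t :: real assume "t > 1"
  define c where "c = (2 / p) powr (p + 1)"
  have "c > 0" using p by (simp add: c_def)
  have hpos: "\<forall>t\<ge>1. h t > 0"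
    using range p by (meson divide_pos_pos less_le_trans zero_less_numeral less_trans)
  have upos: "\<forall>t\<ge>1. h t - t + 1 > 0" using gt by force
  have dh: "\<forall>t>1. (h has_real_derivative c * h t powr (2 - p) / (h t - t + 1)^2) (at t)"
  proof (intro allI impI)
    fix s :: real assume "s > 1"
    then have "(h s - s + 1) powr (-2) = 1 / (h s - s + 1)^2"
      using upos powr_realpow[of "h s - s + 1" 2] by (simp add: powr_minus_divide)
    then show "(h has_real_derivative c * h s powr (2 - p) / (h s - s + 1)^2) (at s)"
      using deriv_eq[rule_format, OF \<open>s > 1\<close>] by (simp add: c_def divide_inverse)
  qed
  have "c * h 1 powr (2 - p) = (2 / p) ^ 3"
    using p by (simp add: c_def h1 powr_add[symmetric] powr_realpow)
  also have "\<dots> < (h 1)^2"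
    using p by (simp add: h1 power_strict_decreasing)
  finally have "c * h t powr (2 - p) < (h t - t + 1)^2"
    using ode_gap_pos[OF \<open>c > 0\<close> _ cont hpos upos dh] p \<open>t > 1\<close> by auto
  moreover have "deriv h t = c * h t powr (2 - p) / (h t - t + 1)^2"
    using dh \<open>t > 1\<close> DERIV_imp_deriv by blast
  ultimately show "deriv h t \<le> 1"
    using upos \<open>t > 1\<close> by (simp add: divide_le_eq)
qed

end
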